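(* Let $p,p'$ be two POPs of size $k$ having the same set of isolated vertices $I=\{i_1<i_2<\dots<i_s\}$ (with $s\ge 1$). Suppose that for every $x\in [i_1,k]\setminus I$ and every $y\in[i_1-1]$ we have $y<_p x$ and $y<_{p'}x$. Let $I_p,I_{p'}$ be the subposets of $p,p'$ induced by the labels $[i_1-1]$, and let $J_p,J_{p'}$ be the subposets of $p,p'$ induced by the labels $[i_1,k]\setminus I$. If $I_p\sim_s I_{p'}$ and $J_p=J_{p'}$ (as labeled posets), then $p\sim p'$.
   Context: A partially ordered pattern (POP) $p$ of size $k$ is a partial order $\le_p$ on the label set $[k]=\{1,\dots,k\}$. A permutation $\pi=\pi_1\cdots\pi_n\in\mathfrak S_n$ contains $p$ if there are indices $i_1<\dots<i_k$ such that $\pi_{i_j}<\pi_{i_m}$ whenever $j<_p m$; otherwise $\pi$ avoids $p$. $\mathfrak S_n(p)$ denotes the set of permutations in $\mathfrak S_n$ avoiding $p$. Two POPs $p,q$ are Wilf-equivalent, $p\sim q$, if $|\mathfrak S_n(p)|=|\mathfrak S_n(q)|$ for all $n\ge1$. A vertex (label) of $p$ is isolated if it is comparable to no other vertex. For $[a,b]=\{a,a+1,\dots,b\}$. A subposet induced by a set of labels keeps the order restricted to those labels (when the labels are $[r]$ it is a POP of size $r$). A Ferrers board $\lambda=(\lambda_1\ge\lambda_2\ge\dots\ge\lambda_n>0)$ with $\lambda_1=n$ is drawn in French notation: rows are numbered $1,\dots,n$ from bottom to top, columns from left to right, and row $i$ consists of the cells $(i,1),\dots,(i,\lambda_i)$.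 A transversal of $\lambda$ is a $0/1$-filling of its cells with exactly one $1$ in each row and each column. A transversal $T$ contains a POP $p$ of size $m$ if there are rows $r_1<\dots<r_m$ and columns $c_1<\dots<c_m$ such that every cell $(r_a,c_b)$ lies in $\lambda$, and for each $b$ the $1$ of column $c_b$ lies in row $r_{\sigma(b)}$ for some $\sigma(b)\in[m]$ (so $\sigma$ is a permutation), with $\sigma(j)<\sigma(m')$ whenever $j<_p m'$; otherwise $T$ avoids $p$. Two POPs $p,q$ are shape-Wilf-equivalent, $p\sim_s q$, if for every Ferrers board $\lambda$ the number of transversals of $\lambda$ avoiding $p$ equals the number avoiding $q$. *)

theory Defs
  imports "HOL-Combinatorics.Permutations"
begin

text \<open>A POP of size k is given by the strict part of a partial order on the labels [k]:
  P x y means x <_p y.\<close>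
definition pop :: "nat \<Rightarrow> (nat \<Rightarrow> nat \<Rightarrow> bool) \<Rightarrow> bool" where
  "pop k P \<longleftrightarrow> (\<forall>x y. P x y \<longrightarrow> x \<in> {1..k} \<and> y \<in> {1..k})
              \<and> (\<forall>x. \<not> P x x)
              \<and> (\<forall>x y z. P x y \<longrightarrow> P y z \<longrightarrow> P x z)"

definition isolated :: "nat \<Rightarrow> (nat \<Rightarrow> nat \<Rightarrow> bool) \<Rightarrow> nat \<Rightarrow> bool" where
  "isolated k P x \<longleftrightarrow> x \<in> {1..k} \<and> (\<forall>y\<in>{1..k}. \<not> P x y \<and> \<not> P y x)"

definition isolated_set :: "nat \<Rightarrow> (nat \<Rightarrow> nat \<Rightarrow> bool) \<Rightarrow> nat set" where
  "isolated_set k P = {x. isolated k P x}"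

definition restr :: "(nat \<Rightarrow> nat \<Rightarrow> bool) \<Rightarrow> nat set \<Rightarrow> nat \<Rightarrow> nat \<Rightarrow> bool" where
  "restr P A = (\<lambda>x y. x \<in> A \<and> y \<in> A \<and> P x y)"

definition contains :: "nat \<Rightarrow> (nat \<Rightarrow> nat \<Rightarrow> bool) \<Rightarrow> nat \<Rightarrow> (nat \<Rightarrow> nat) \<Rightarrow> bool" where
  "contains k P n \<pi> \<longleftrightarrow> (\<exists>i :: nat \<Rightarrow> nat.
      (\<forall>j\<in>{1..k}. i j \<in> {1..n})
    \<and> (\<forall>j m. 1 \<le> j \<longrightarrow> j < m \<longrightarrow> m \<le> k \<longrightarrow> i j < i m)
    \<and> (\<forall>j m. P j m \<longrightarrow> \<pi> (i j) < \<pi> (i m)))"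

definition avoiders :: "nat \<Rightarrow> (nat \<Rightarrow> nat \<Rightarrow> bool) \<Rightarrow> nat \<Rightarrow> (nat \<Rightarrow> nat) set" where
  "avoiders k P n = {\<pi>. \<pi> permutes {1..n} \<and> \<not> contains k P n \<pi>}"

definition wilf_equiv :: "nat \<Rightarrow> (nat \<Rightarrow> nat \<Rightarrow> bool) \<Rightarrow> (nat \<Rightarrow> nat \<Rightarrow> bool) \<Rightarrow> bool" where
  "wilf_equiv k P Q \<longleftrightarrow> (\<forall>n\<ge>1. card (avoiders k P n) = card (avoiders k Q n))"

definition ferrers :: "nat \<Rightarrow> (nat \<Rightarrow> nat) \<Rightarrow> bool" where
  "ferrers n lam \<longleftrightarrow> lam 1 = n \<and> (\<forall>i j. 1 \<le> i \<longrightarrow> i \<le> j \<longrightarrow> j \<le> n \<longrightarrow> lam j \<le> lam i)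
                     \<and> (\<forall>i\<in>{1..n}. lam i > 0)"

definition cells :: "nat \<Rightarrow> (nat \<Rightarrow> nat) \<Rightarrow> (nat \<times> nat) set" where
  "cells n lam = {(r, c). r \<in> {1..n} \<and> c \<in> {1..lam r}}"

text \<open>A transversal: the set of cells (row, column) filled with 1.\<close>
definition transversal :: "nat \<Rightarrow> (nat \<Rightarrow> nat) \<Rightarrow> (nat \<times> nat) set \<Rightarrow> bool" where
  "transversal n lam T \<longleftrightarrow> T \<subseteq> cells n lam
     \<and> (\<forall>r\<in>{1..n}. \<exists>!c. (r, c) \<in> T)
     \<and> (\<forall>c\<in>{1..n}. \<exists>!r. (r, c) \<in> T)"

definition tcontains :: "nat \<Rightarrow> (nat \<Rightarrow> nat) \<Rightarrow> (nat \<times> nat) set \<Rightarrow> nat \<Rightarrow> (nat \<Rightarrow> nat \<Rightarrow> bool) \<Rightarrow> bool" where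
  "tcontains n lam T m Q \<longleftrightarrow> (\<exists>(r :: nat \<Rightarrow> nat) (c :: nat \<Rightarrow> nat) (\<sigma> :: nat \<Rightarrow> nat).
      (\<forall>a\<in>{1..m}. r a \<in> {1..n} \<and> c a \<in> {1..n})
    \<and> (\<forall>a b. 1 \<le> a \<longrightarrow> a < b \<longrightarrow> b \<le> m \<longrightarrow> r a < r b \<and> c a < c b)
    \<and> (\<forall>a\<in>{1..m}. \<forall>b\<in>{1..m}. (r a, c b) \<in> cells n lam)
    \<and> (\<forall>b\<in>{1..m}. \<sigma> b \<in> {1..m} \<and> (r (\<sigma> b), c b) \<in> T)
    \<and> (\<forall>j m'. Q j m' \<longrightarrow> \<sigma> j < \<sigma> m'))"

definition tavoiders :: "nat \<Rightarrow> (nat \<Rightarrow> nat) \<Rightarrow> nat \<Rightarrow> (nat \<Rightarrow> nat \<Rightarrow> bool) \<Rightarrow> (nat \<times> nat) set set" where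
  "tavoiders n lam m Q = {T. transversal n lam T \<and> \<not> tcontains n lam T m Q}"

definition shape_wilf_equiv :: "nat \<Rightarrow> (nat \<Rightarrow> nat \<Rightarrow> bool) \<Rightarrow> (nat \<Rightarrow> nat \<Rightarrow> bool) \<Rightarrow> bool" where
  "shape_wilf_equiv m P Q \<longleftrightarrow>
     (\<forall>n lam. ferrers n lam \<longrightarrow> card (tavoiders n lam m P) = card (tavoiders n lam m Q))"

end

theory Submission
  imports Defs
begin

text \<open>Let \<open>m = i\<^sub>1 - 1\<close>. For a permutation \<open>\<pi>\<close>, a cell \<open>(v, c)\<close> lies in the shadow of \<open>\<pi>\<close> if
  some occurrence of the labels \<open>m+1..k\<close> (the isolated ones constraining only positions) lies
  strictly to the right of column \<open>c\<close> with all its non-isolated entries above row \<open>v\<close>. The shadow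
  is a down-set, and it is determined by the points of \<open>\<pi>\<close> outside it, because an occurrence can
  be pushed north-east until its non-isolated entries leave the shadow. Group permutations by
  their shadow together with the points outside it: within a class the remaining points,
  compressed to the free rows and columns, run exactly through the transversals of a Ferrers
  board. As every label of \<open>[m]\<close> lies below every non-isolated label above \<open>m\<close>, \<open>\<pi>\<close> contains \<open>p\<close>
  iff the occurrence of its lower part can be placed inside the shadow, i.e. iff the transversal
  contains \<open>I\<^sub>p\<close>. The classes depend on \<open>J\<^sub>p = J\<^sub>p\<^sub>'\<close> only, so shape-Wilf-equivalence of
  \<open>I\<^sub>p\<close> and \<open>I\<^sub>p\<^sub>'\<close> gives equal numbers of avoiders in every class. When \<open>i\<^sub>1 = 1\<close> there is no
  lower part and \<open>p = p'\<close>.\<close>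

definition ith_smallest :: "nat set \<Rightarrow> nat \<Rightarrow> nat" where
  "ith_smallest S i = sorted_list_of_set S ! (i - 1)"

lemma bij_betw_ith_smallest:
  assumes "finite S"
  shows "bij_betw (ith_smallest S) {1..card S} S"
proof -
  have "bij_betw (\<lambda>i. i - 1) {1..card S} {..<card S}"
    by (rule bij_betw_byWitness[where f' = Suc]) (auto simp: image_iff)
  moreover have "bij_betw ((!) (sorted_list_of_set S)) {..<card S} S"
    by (rule bij_betw_nth) (simp_all add: assms)
  ultimately have "bij_betw ((!) (sorted_list_of_set S) \<circ> (\<lambda>i. i - 1)) {1..card S} S"
    by (rule bij_betw_trans)
  then show ?thesis
    unfolding ith_smallest_def[abs_def] comp_def .
qed

lemma strict_mono_on_ith_smallest:
  assumes "finite S"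
  shows "strict_mono_on {1..card S} (ith_smallest S)"
  unfolding ith_smallest_def
  by (rule strict_mono_onI, rule sorted_wrt_nth_less[OF strict_sorted_list_of_set])
    (auto simp: assms)

lemma strict_mono_on_atLeastAtMost_iff:
  fixes f :: "nat \<Rightarrow> 'a::order"
  shows "strict_mono_on {1..m} f \<longleftrightarrow> (\<forall>a b. 1 \<le> a \<longrightarrow> a < b \<longrightarrow> b \<le> m \<longrightarrow> f a < f b)"
proof
  show "\<forall>a b. 1 \<le> a \<longrightarrow> a < b \<longrightarrow> b \<le> m \<longrightarrow> f a < f b" if "strict_mono_on {1..m} f"
  proof (intro allI impI)
    fix a b :: nat assume "1 \<le> a" "a < b" "b \<le> m"
    then show "f a < f b" by (intro strict_mono_onD[OF that]) auto
  qed
qed (auto intro: strict_mono_onI)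

lemma ex_sorted_values:
  fixes w :: "nat \<Rightarrow> nat"
  assumes "inj_on w {1..m}"
  shows "\<exists>r \<sigma>. strict_mono_on {1..m} r \<and> r ` {1..m} = w ` {1..m}
    \<and> (\<forall>b\<in>{1..m}. \<sigma> b \<in> {1..m} \<and> r (\<sigma> b) = w b)"
proof -
  let ?W = "w ` {1..m}"
  let ?r = "ith_smallest ?W"
  have card: "card ?W = m"
    using card_image[OF assms] by simp
  then have bij: "bij_betw ?r {1..m} ?W"
    using bij_betw_ith_smallest[of ?W] by simp
  show ?thesis
  proof (intro exI conjI ballI)
    show "strict_mono_on {1..m} ?r"
      using strict_mono_on_ith_smallest[of ?W] card by simp
    show "?r ` {1..m} = ?W"
      using bij by (simp add: bij_betw_def)
    fix b assume "b \<in> {1..m}"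
    then have "w b \<in> ?W"
      by simp
    then show "inv_into {1..m} ?r (w b) \<in> {1..m}" "?r (inv_into {1..m} ?r (w b)) = w b"
      using bij_betw_apply[OF bij_betw_inv_into[OF bij]] bij_betw_inv_into_right[OF bij] by simp_all
  qed
qed

lemma ex_argmax_atLeastAtMost:
  fixes f :: "nat \<Rightarrow> 'a::linorder"
  assumes "1 \<le> m"
  shows "\<exists>a0\<in>{1..m}. \<forall>a\<in>{1..m}. f a \<le> f a0"
proof -
  obtain a0 where a0: "a0 \<in> {1..m}" "f a0 = Max (f ` {1..m})"
    using Max_in[of "f ` {1..m}"] assms by fastforce
  have "f a \<le> f a0" if "a \<in> {1..m}" for a
    using that a0(2) by simp
  then show ?thesis
    using a0(1) by blast
qed

lemma down_closed_eq_atLeastAtMost_Max: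
  fixes S :: "nat set"
  assumes "finite S" "0 \<notin> S" and down: "\<And>c d. c \<in> S \<Longrightarrow> 1 \<le> d \<Longrightarrow> d \<le> c \<Longrightarrow> d \<in> S"
  shows "{1..Max (insert 0 S)} = S"
proof (cases "S = {}")
  case False
  have "Max (insert 0 S) = Max S"
    using assms(1) False by simp
  moreover have "{1..Max S} = S"
  proof (rule set_eqI, rule iffI)
    fix c
    show "c \<in> S" if "c \<in> {1..Max S}"
      using down[OF Max_in[OF assms(1) False]] that by simp
    show "c \<in> {1..Max S}" if "c \<in> S"
      using that assms(1,2) by (cases c) auto
  qed
  ultimately show ?thesis
    by simp
qed simp

lemma card_eq_by_fibres:
  assumes "finite A"
    and "\<And>y. y \<in> f ` A \<Longrightarrow> card {x\<in>A. f x = y \<and> P x} = card {x\<in>A. f x = y \<and> P' x}"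
  shows "card {x\<in>A. P x} = card {x\<in>A. P' x}"
proof -
  have fibres: "card {x\<in>A. P x} = (\<Sum>y\<in>f ` A. card {x\<in>A. f x = y \<and> P x})" for P
  proof -
    have "{x\<in>A. P x} = (\<Union>y\<in>f ` A. {x\<in>A. f x = y \<and> P x})"
      by auto
    also have "card \<dots> = (\<Sum>y\<in>f ` A. card {x\<in>A. f x = y \<and> P x})"
      by (rule card_UN_disjoint) (auto simp: assms(1))
    finally show ?thesis .
  qed
  show ?thesis
    unfolding fibres[of P] fibres[of P'] using assms(2) by (rule sum.cong[OF refl])
qed

lemma strict_mono_on_glue:
  fixes i g :: "nat \<Rightarrow> 'a::order"
  assumes "strict_mono_on {1..m} i" "strict_mono_on {m+1..k} g" "1 \<le> m \<Longrightarrow> i m < g (m+1)"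
  shows "strict_mono_on {1..k} (\<lambda>j. if j \<le> m then i j else g j)"
proof (rule strict_mono_onI)
  fix j j' :: nat assume j: "j \<in> {1..k}" "j' \<in> {1..k}" "j < j'"
  consider "j' \<le> m" | "m < j" | "j \<le> m" "m < j'"
    by linarith
  then show "(if j \<le> m then i j else g j) < (if j' \<le> m then i j' else g j')"
  proof cases
    case 3
    then have "i j \<le> i m" "g (m+1) \<le> g j'"
      using j strict_mono_on_less_eq[OF assms(1), of j m] strict_mono_on_less_eq[OF assms(2), of "m+1" j']
      by auto
    then show ?thesis
      using 3 j assms(3) by (auto intro: order.strict_trans1 order.strict_trans2)
  qed (use j assms(1,2) in \<open>auto intro: strict_mono_onD\<close>)
qed

lemma pop_field: "pop k p \<Longrightarrow> p x y \<Longrightarrow> x \<in> {1..k} \<and> y \<in> {1..k}"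
  unfolding pop_def by blast

lemma pop_asym: "pop k p \<Longrightarrow> p x y \<Longrightarrow> \<not> p y x"
  unfolding pop_def by blast

text \<open>The diagram of \<open>\<pi>\<close> as a set of cells (row, column) = (value, position), matching the
  orientation of Ferrers boards.\<close>
definition points :: "nat \<Rightarrow> (nat \<Rightarrow> nat) \<Rightarrow> (nat \<times> nat) set" where
  "points n \<pi> = {(\<pi> j, j) | j. j \<in> {1..n}}"

lemma mem_points_iff [simp]: "(a, j) \<in> points n \<pi> \<longleftrightarrow> j \<in> {1..n} \<and> a = \<pi> j"
  unfolding points_def by auto

lemma points_inject:
  assumes "\<pi> permutes {1..n}" "\<tau> permutes {1..n}" "points n \<pi> = points n \<tau>"
  shows "\<pi> = \<tau>"
proof
  fix j
  show "\<pi> j = \<tau> j"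
  proof (cases "j \<in> {1..n}")
    case True
    then have "(\<pi> j, j) \<in> points n \<tau>"
      using assms(3) by (metis mem_points_iff)
    then show ?thesis
      by simp
  qed (use assms(1,2) permutes_not_in in metis)
qed

lemma cells_subset:
  assumes "ferrers N lam"
  shows "cells N lam \<subseteq> {1..N} \<times> {1..N}"
proof
  fix z assume "z \<in> cells N lam"
  then obtain r c where "z = (r, c)" "r \<in> {1..N}" "c \<in> {1..lam r}"
    unfolding cells_def by blast
  moreover have "lam r \<le> lam 1" "lam 1 = N"
    using assms calculation(2) unfolding ferrers_def by auto
  ultimately show "z \<in> {1..N} \<times> {1..N}"
    by auto
qed

lemma transversal_points:
  assumes "\<tau> permutes {1..N}" "\<And>c. c \<in> {1..N} \<Longrightarrow> (\<tau> c, c) \<in> cells N lam"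
  shows "transversal N lam (points N \<tau>)"
  unfolding transversal_def
proof (intro conjI ballI)
  show "points N \<tau> \<subseteq> cells N lam"
    using assms(2) by auto
  show "\<exists>!c. (r, c) \<in> points N \<tau>" if "r \<in> {1..N}" for r
  proof (rule ex1I[of _ "inv \<tau> r"])
    show "(r, inv \<tau> r) \<in> points N \<tau>"
      using that permutes_in_image[OF assms(1), of "inv \<tau> r"] permutes_inverses(1)[OF assms(1)]
      by simp
    show "c = inv \<tau> r" if "(r, c) \<in> points N \<tau>" for c
      using that permutes_inverses(2)[OF assms(1)] by simp
  qed
  show "\<exists>!r. (r, c) \<in> points N \<tau>" if "c \<in> {1..N}" for c
    using that by simp
qed

lemma obtain_permutation_of_transversal:
  assumes "ferrers N lam" "transversal N lam T"
  obtains \<tau> where "\<tau> permutes {1..N}" "points N \<tau> = T"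
proof
  have sub: "T \<subseteq> {1..N} \<times> {1..N}"
    using assms cells_subset unfolding transversal_def by blast
  have row: "\<And>r. r \<in> {1..N} \<Longrightarrow> \<exists>!c. (r, c) \<in> T"
    and col: "\<And>c. c \<in> {1..N} \<Longrightarrow> \<exists>!r. (r, c) \<in> T"
    using assms(2) unfolding transversal_def by auto
  define \<tau> where "\<tau> c = (if c \<in> {1..N} then THE r. (r, c) \<in> T else c)" for c
  have in_T: "(\<tau> c, c) \<in> T" if "c \<in> {1..N}" for c
    using theI'[OF col[OF that]] that by (simp add: \<tau>_def)
  have \<tau>_eq: "\<tau> c = r" if "(r, c) \<in> T" for r c
    using in_T col sub that by blast
  show "points N \<tau> = T"
    using in_T \<tau>_eq sub by fastforce
  show "\<tau> permutes {1..N}"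
  proof (rule inj_imp_permutes)
    show "inj_on \<tau> {1..N}"
    proof (rule inj_onI)
      fix c c' assume "c \<in> {1..N}" "c' \<in> {1..N}" "\<tau> c = \<tau> c'"
      then show "c = c'"
        using in_T row sub by (metis mem_Sigma_iff subsetD)
    qed
    show "\<tau> c \<in> {1..N}" if "c \<in> {1..N}" for c
      using in_T[OF that] sub by blast
    show "\<tau> c = c" if "c \<notin> {1..N}" for c
      using that unfolding \<tau>_def by (simp only: if_False)
  qed simp
qed

section \<open>The shadow of the upper part\<close>

text \<open>Labels \<open>1..m\<close> form the lower part of the pattern and \<open>m+1..k\<close> the upper part; \<open>J\<close> is the
  set of its non-isolated labels and \<open>Q\<close> the order on it (the poset \<open>J\<^sub>p\<close>). Since \<open>n\<close> occurs in
  no assumption, the locale predicates \<open>upper_pattern\<close> and \<open>split_pop\<close> do not take it as an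
  argument.\<close>
locale upper_pattern =
  fixes n m k :: nat and J :: "nat set" and Q :: "nat \<Rightarrow> nat \<Rightarrow> bool"
  assumes J_subset: "J \<subseteq> {m+1..k}"
    and Q_field: "\<And>x y. Q x y \<Longrightarrow> x \<in> J \<and> y \<in> J"
    and m_less_k: "m < k"
begin

definition upper_occ :: "(nat \<Rightarrow> nat) \<Rightarrow> nat \<Rightarrow> nat \<Rightarrow> (nat \<Rightarrow> nat) \<Rightarrow> bool" where
  "upper_occ \<pi> c v g \<longleftrightarrow> (\<forall>x\<in>{m+1..k}. g x \<in> {1..n}) \<and> strict_mono_on {m+1..k} g \<and> c < g (m+1)
     \<and> (\<forall>x\<in>J. v < \<pi> (g x)) \<and> (\<forall>x y. Q x y \<longrightarrow> \<pi> (g x) < \<pi> (g y))"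

definition shadow :: "(nat \<Rightarrow> nat) \<Rightarrow> (nat \<times> nat) set" where
  "shadow \<pi> = {(v, c). v \<in> {1..n} \<and> c \<in> {1..n} \<and> (\<exists>g. upper_occ \<pi> c v g)}"

definition key :: "(nat \<Rightarrow> nat) \<Rightarrow> (nat \<times> nat) set \<times> (nat \<times> nat) set" where
  "key \<pi> = (shadow \<pi>, points n \<pi> - shadow \<pi>)"

lemma upper_occ_mono: "upper_occ \<pi> c v g \<Longrightarrow> c' \<le> c \<Longrightarrow> v' \<le> v \<Longrightarrow> upper_occ \<pi> c' v' g"
  unfolding upper_occ_def using le_less_trans by blast

lemma shadow_down_closed:
  "(v, c) \<in> shadow \<pi> \<Longrightarrow> 1 \<le> v' \<Longrightarrow> v' \<le> v \<Longrightarrow> 1 \<le> c' \<Longrightarrow> c' \<le> c \<Longrightarrow> (v', c') \<in> shadow \<pi>"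
  unfolding shadow_def by (auto intro: upper_occ_mono)

lemma upper_occ_cong:
  assumes "\<And>x. x \<in> J \<Longrightarrow> \<pi> (g x) = \<pi>' (g x)"
  shows "upper_occ \<pi> c v g = upper_occ \<pi>' c v g"
proof -
  have "(\<forall>x y. Q x y \<longrightarrow> \<pi> (g x) < \<pi> (g y)) = (\<forall>x y. Q x y \<longrightarrow> \<pi>' (g x) < \<pi>' (g y))"
    using assms Q_field by metis
  then show ?thesis
    unfolding upper_occ_def using assms by auto
qed

lemma upper_occ_J:
  assumes "upper_occ \<pi> c v g" "x \<in> J"
  shows "c < g x" "g x \<in> {1..n}"
proof -
  have x: "x \<in> {m+1..k}"
    using assms(2) J_subset by auto
  then have "g (m+1) \<le> g x"
    using assms(1) m_less_k strict_mono_on_less_eq[of "{m+1..k}" g "m+1" x]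
    unfolding upper_occ_def by auto
  then show "c < g x" "g x \<in> {1..n}"
    using assms(1) x unfolding upper_occ_def by auto
qed

text \<open>An occurrence whose non-isolated entries lie in the shadow can be pushed further
  north-east, so eventually all of them lie outside it.\<close>
lemma obtain_upper_occ_outside_shadow:
  assumes "upper_occ \<pi> c v g"
  obtains g' where "upper_occ \<pi> c v g'" "\<And>x. x \<in> J \<Longrightarrow> (\<pi> (g' x), g' x) \<notin> shadow \<pi>"
  using assms
proof (induction "n - c" arbitrary: c v g thesis rule: less_induct)
  case less
  show ?case
  proof (cases "\<forall>x\<in>J. (\<pi> (g x), g x) \<notin> shadow \<pi>")
    case True
    then show ?thesis
      using less.prems by blast
  next
    case False
    then obtain x where x: "x \<in> J" "(\<pi> (g x), g x) \<in> shadow \<pi>"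
      by blast
    then obtain h where h: "upper_occ \<pi> (g x) (\<pi> (g x)) h"
      unfolding shadow_def by blast
    have "c < g x" "g x \<in> {1..n}" "v < \<pi> (g x)"
      using upper_occ_J[OF less.prems(2) x(1)] less.prems(2) x(1) unfolding upper_occ_def by auto
    then have "n - g x < n - c"
      by auto
    from less.hyps[OF this _ h] obtain g' where
      "upper_occ \<pi> (g x) (\<pi> (g x)) g'" "\<And>y. y \<in> J \<Longrightarrow> (\<pi> (g' y), g' y) \<notin> shadow \<pi>"
      by blast
    moreover have "upper_occ \<pi> c v g'"
      using upper_occ_mono[OF calculation(1)] \<open>c < g x\<close> \<open>v < \<pi> (g x)\<close> by simp
    ultimately show ?thesis
      using less.prems(1) by blast
  qed
qed

lemma shadow_subset:
  assumes "points n \<pi> - shadow \<pi> \<subseteq> points n \<pi>'"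
  shows "shadow \<pi> \<subseteq> shadow \<pi>'"
proof
  fix z assume "z \<in> shadow \<pi>"
  then obtain v c g where z: "z = (v, c)" "v \<in> {1..n}" "c \<in> {1..n}" "upper_occ \<pi> c v g"
    unfolding shadow_def by blast
  then obtain g' where g': "upper_occ \<pi> c v g'" "\<And>x. x \<in> J \<Longrightarrow> (\<pi> (g' x), g' x) \<notin> shadow \<pi>"
    using obtain_upper_occ_outside_shadow by blast
  have "\<pi> (g' x) = \<pi>' (g' x)" if "x \<in> J" for x
  proof -
    have "(\<pi> (g' x), g' x) \<in> points n \<pi> - shadow \<pi>"
      using g'(2)[OF that] upper_occ_J(2)[OF g'(1) that] by simp
    then have "(\<pi> (g' x), g' x) \<in> points n \<pi>'"
      using assms by blast
    then show ?thesis
      by simp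
  qed
  then have "upper_occ \<pi>' c v g'"
    using upper_occ_cong g'(1) by blast
  then show "z \<in> shadow \<pi>'"
    using z unfolding shadow_def by blast
qed

lemma shadow_eq_if_outside_eq:
  assumes "points n \<pi> - shadow \<pi> = points n \<pi>' - shadow \<pi>"
  shows "shadow \<pi>' = shadow \<pi>"
proof
  show "shadow \<pi> \<subseteq> shadow \<pi>'"
    using assms by (intro shadow_subset) blast
  then show "shadow \<pi>' \<subseteq> shadow \<pi>"
    using assms by (intro shadow_subset) blast
qed

definition shadow_occ :: "(nat \<Rightarrow> nat) \<Rightarrow> (nat \<Rightarrow> nat \<Rightarrow> bool) \<Rightarrow> (nat \<Rightarrow> nat) \<Rightarrow> bool" where
  "shadow_occ \<pi> P i \<longleftrightarrow> (\<forall>a\<in>{1..m}. i a \<in> {1..n}) \<and> strict_mono_on {1..m} i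
     \<and> (\<forall>a b. P a b \<longrightarrow> \<pi> (i a) < \<pi> (i b)) \<and> (\<forall>a\<in>{1..m}. \<forall>b\<in>{1..m}. (\<pi> (i a), i b) \<in> shadow \<pi>)"

end

locale split_pop = upper_pattern +
  fixes p :: "nat \<Rightarrow> nat \<Rightarrow> bool"
  assumes pop: "pop k p" and m_pos: "1 \<le> m"
    and upper_rel_J: "\<And>x y. p x y \<Longrightarrow> (m < x \<longrightarrow> x \<in> J) \<and> (m < y \<longrightarrow> y \<in> J)"
    and J_above_lower: "\<And>x y. x \<in> J \<Longrightarrow> y \<in> {1..m} \<Longrightarrow> p y x"
    and Q_eq: "Q = restr p J"
begin

lemma occurrence_corner_in_shadow:
  assumes perm: "\<pi> permutes {1..n}" and range: "\<forall>j\<in>{1..k}. i j \<in> {1..n}"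
    and mono: "strict_mono_on {1..k} i" and rel: "\<forall>j j'. p j j' \<longrightarrow> \<pi> (i j) < \<pi> (i j')"
    and a: "a \<in> {1..m}"
  shows "(\<pi> (i a), i m) \<in> shadow \<pi>"
proof -
  have "upper_occ \<pi> (i m) (\<pi> (i a)) i"
    unfolding upper_occ_def
  proof (intro conjI ballI allI impI)
    show "i x \<in> {1..n}" if "x \<in> {m+1..k}" for x
      using range that by auto
    show "strict_mono_on {m+1..k} i"
      using mono by (rule monotone_on_subset) auto
    show "i m < i (m+1)"
      using m_pos m_less_k by (intro strict_mono_onD[OF mono]) auto
    show "\<pi> (i a) < \<pi> (i x)" if "x \<in> J" for x
      using rel J_above_lower that a by blast
    show "\<pi> (i x) < \<pi> (i y)" if "Q x y" for x y
      using rel that Q_eq unfolding restr_def by blast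
  qed
  moreover have "\<pi> (i a) \<in> {1..n}" "i m \<in> {1..n}"
    using range a m_pos m_less_k permutes_in_image[OF perm] by auto
  ultimately show ?thesis
    unfolding shadow_def by blast
qed

lemma contains_imp_shadow_occ:
  assumes perm: "\<pi> permutes {1..n}" and "contains k p n \<pi>"
  shows "\<exists>i. shadow_occ \<pi> (restr p {1..m}) i"
proof -
  obtain i where range: "\<forall>j\<in>{1..k}. i j \<in> {1..n}" and mono: "strict_mono_on {1..k} i"
    and rel: "\<forall>j j'. p j j' \<longrightarrow> \<pi> (i j) < \<pi> (i j')"
    using assms(2) unfolding contains_def strict_mono_on_atLeastAtMost_iff[symmetric] by blast
  have "shadow_occ \<pi> (restr p {1..m}) i"
    unfolding shadow_occ_def
  proof (intro conjI ballI allI impI)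
    show "i a \<in> {1..n}" if "a \<in> {1..m}" for a
      using range that m_less_k by auto
    show "strict_mono_on {1..m} i"
      using mono by (rule monotone_on_subset) (use m_less_k in auto)
    show "\<pi> (i a) < \<pi> (i b)" if "restr p {1..m} a b" for a b
      using rel that unfolding restr_def by blast
    show "(\<pi> (i a), i b) \<in> shadow \<pi>" if "a \<in> {1..m}" "b \<in> {1..m}" for a b
    proof (rule shadow_down_closed[OF occurrence_corner_in_shadow[OF perm range mono rel that(1)]])
      have "i a \<in> {1..n}"
        using range that(1) m_less_k by auto
      then show "1 \<le> \<pi> (i a)"
        using permutes_in_image[OF perm] by auto
      show "1 \<le> i b" "i b \<le> i m"
        using range that m_less_k strict_mono_on_less_eq[OF mono, of b m] by auto
    qed simp
  qed
  then show ?thesis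
    by blast
qed

lemma glued_occurrence_rel:
  assumes lower: "\<And>a b. restr p {1..m} a b \<Longrightarrow> \<pi> (i a) < \<pi> (i b)"
    and above: "\<And>a x. a \<in> {1..m} \<Longrightarrow> x \<in> J \<Longrightarrow> \<pi> (i a) < \<pi> (g x)"
    and upper: "\<And>x y. Q x y \<Longrightarrow> \<pi> (g x) < \<pi> (g y)"
    and "p j j'"
  shows "\<pi> (if j \<le> m then i j else g j) < \<pi> (if j' \<le> m then i j' else g j')"
proof -
  have field: "j \<in> {1..k}" "j' \<in> {1..k}"
    using pop_field[OF pop assms(4)] by auto
  consider "j \<le> m" "j' \<le> m" | "j \<le> m" "m < j'" | "m < j" "j' \<le> m" | "m < j" "m < j'"
    by linarith
  then show ?thesis
  proof cases
    case 1
    then have "restr p {1..m} j j'"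
      using assms(4) field unfolding restr_def by auto
    then show ?thesis
      using lower 1 by simp
  next
    case 2
    then show ?thesis
      using above upper_rel_J[OF assms(4)] field by simp
  next
    case 3
    then have "p j' j"
      using J_above_lower upper_rel_J[OF assms(4)] field by auto
    then show ?thesis
      using pop_asym[OF pop assms(4)] by contradiction
  next
    case 4
    then have "Q j j'"
      using Q_eq upper_rel_J[OF assms(4)] assms(4) unfolding restr_def by auto
    then show ?thesis
      using upper 4 by simp
  qed
qed

lemma shadow_occ_imp_contains:
  assumes "shadow_occ \<pi> (restr p {1..m}) i"
  shows "contains k p n \<pi>"
proof -
  have i_range: "\<And>a. a \<in> {1..m} \<Longrightarrow> i a \<in> {1..n}" and i_mono: "strict_mono_on {1..m} i"
    and i_rel: "\<And>a b. restr p {1..m} a b \<Longrightarrow> \<pi> (i a) < \<pi> (i b)"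
    and i_shadow: "\<And>a b. a \<in> {1..m} \<Longrightarrow> b \<in> {1..m} \<Longrightarrow> (\<pi> (i a), i b) \<in> shadow \<pi>"
    using assms unfolding shadow_occ_def by auto
  obtain a0 where a0: "a0 \<in> {1..m}" "\<And>a. a \<in> {1..m} \<Longrightarrow> \<pi> (i a) \<le> \<pi> (i a0)"
    using ex_argmax_atLeastAtMost[OF m_pos, of "\<lambda>a. \<pi> (i a)"] by blast
  obtain g where "upper_occ \<pi> (i m) (\<pi> (i a0)) g"
    using i_shadow[OF a0(1), of m] m_pos unfolding shadow_def by auto
  then have g_range: "\<And>x. x \<in> {m+1..k} \<Longrightarrow> g x \<in> {1..n}" and g_mono: "strict_mono_on {m+1..k} g"
    and g_first: "i m < g (m+1)" and g_above: "\<And>x. x \<in> J \<Longrightarrow> \<pi> (i a0) < \<pi> (g x)"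
    and g_rel: "\<And>x y. Q x y \<Longrightarrow> \<pi> (g x) < \<pi> (g y)"
    unfolding upper_occ_def by auto
  define h where "h j = (if j \<le> m then i j else g j)" for j
  have "strict_mono_on {1..k} h"
    unfolding h_def using i_mono g_mono g_first by (rule strict_mono_on_glue)
  moreover have "\<pi> (h j) < \<pi> (h j')" if "p j j'" for j j'
    unfolding h_def
  proof (rule glued_occurrence_rel[of \<pi> i g j j', OF i_rel _ g_rel that])
    show "\<pi> (i a) < \<pi> (g x)" if "a \<in> {1..m}" "x \<in> J" for a x
      using a0(2)[OF that(1)] g_above[OF that(2)] by simp
  qed
  moreover have "h j \<in> {1..n}" if "j \<in> {1..k}" for j
    using i_range g_range that unfolding h_def by auto
  ultimately show ?thesis
    unfolding contains_def strict_mono_on_atLeastAtMost_iff[symmetric] by blast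
qed

lemma contains_iff_shadow_occ:
  assumes "\<pi> permutes {1..n}"
  shows "contains k p n \<pi> \<longleftrightarrow> (\<exists>i. shadow_occ \<pi> (restr p {1..m}) i)"
  using contains_imp_shadow_occ[OF assms] shadow_occ_imp_contains by blast

end

section \<open>Fibres of the key and Ferrers boards\<close>

text \<open>The rows and columns not used by its points outside \<open>B\<close>,
  enumerated by \<open>free_row\<close> and \<open>free_col\<close>, cut a Ferrers board \<open>lam\<close> out of \<open>B\<close>, and \<open>squeeze\<close>
  reads a permutation with the same key as \<open>\<pi>0\<close> as a permutation of \<open>{1..n'}\<close> on that board.\<close>
locale upper_fibre = upper_pattern +
  fixes \<pi>0 :: "nat \<Rightarrow> nat"
  assumes perm0: "\<pi>0 permutes {1..n}"
begin

definition "B = shadow \<pi>0"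
definition "outside = points n \<pi>0 - B"
definition "free_rows = {1..n} - fst ` outside"
definition "free_cols = {1..n} - snd ` outside"
definition "n' = card free_cols"
definition "free_row = ith_smallest free_rows"
definition "free_col = ith_smallest free_cols"
definition "lam i = Max (insert 0 {c\<in>{1..n'}. (free_row i, free_col c) \<in> B})"
definition "fibre = {\<pi>. \<pi> permutes {1..n} \<and> points n \<pi> - B = outside}"
definition "squeeze \<pi> c = (if c \<in> {1..n'} then inv_into {1..n'} free_row (\<pi> (free_col c)) else c)"
definition "transversal_of \<pi> = points n' (squeeze \<pi>)"

lemma fibre_permutes: "\<pi> \<in> fibre \<Longrightarrow> \<pi> permutes {1..n}"
  unfolding fibre_def by blast

lemma perm0_in_fibre: "\<pi>0 \<in> fibre"
  unfolding fibre_def outside_def using perm0 by blast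

lemma fibre_shadow: "\<pi> \<in> fibre \<Longrightarrow> shadow \<pi> = B"
  unfolding fibre_def outside_def B_def using shadow_eq_if_outside_eq[of \<pi>0 \<pi>] by auto

lemma key_eq_iff_fibre:
  assumes "\<pi> permutes {1..n}"
  shows "key \<pi> = key \<pi>0 \<longleftrightarrow> \<pi> \<in> fibre"
proof
  assume "key \<pi> = key \<pi>0"
  then have "shadow \<pi> = B \<and> points n \<pi> - shadow \<pi> = outside"
    unfolding key_def B_def outside_def by (rule prod.inject[THEN iffD1])
  then have "points n \<pi> - B = outside"
    by (elim conjE) (simp only:)
  then show "\<pi> \<in> fibre"
    using assms unfolding fibre_def by blast
next
  assume "\<pi> \<in> fibre"
  then have "shadow \<pi> = B" "points n \<pi> - B = outside"
    using fibre_shadow unfolding fibre_def by blast+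
  then show "key \<pi> = key \<pi>0"
    unfolding key_def B_def outside_def by simp
qed

lemma outside_in_fibre:
  assumes "\<pi> \<in> fibre" "(a, j) \<in> outside"
  shows "j \<in> {1..n} \<and> a = \<pi> j"
proof -
  have "(a, j) \<in> points n \<pi>"
    using assms unfolding fibre_def by blast
  then show ?thesis
    by simp
qed

lemma free_cols_subset: "free_cols \<subseteq> {1..n}"
  unfolding free_cols_def by blast

lemma free_rows_subset: "free_rows \<subseteq> {1..n}"
  unfolding free_rows_def by blast

lemma fibre_outside: "\<pi> \<in> fibre \<Longrightarrow> outside = points n \<pi> - B"
  unfolding fibre_def by blast

lemma mem_free_cols_iff:
  assumes "\<pi> \<in> fibre" "j \<in> {1..n}"
  shows "j \<in> free_cols \<longleftrightarrow> (\<pi> j, j) \<in> B"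
proof -
  have "j \<in> snd ` outside \<longleftrightarrow> (\<pi> j, j) \<in> outside"
  proof
    assume "j \<in> snd ` outside"
    then obtain a where "(a, j) \<in> outside"
      by (metis prod.collapse imageE)
    then show "(\<pi> j, j) \<in> outside"
      using outside_in_fibre[OF assms(1)] by metis
  qed (metis image_eqI snd_conv)
  also have "\<dots> \<longleftrightarrow> (\<pi> j, j) \<notin> B"
    using assms(2) unfolding fibre_outside[OF assms(1)] by simp
  finally show ?thesis
    using assms(2) unfolding free_cols_def by blast
qed

lemma mem_free_rows_iff:
  assumes "\<pi> \<in> fibre" "j \<in> {1..n}"
  shows "\<pi> j \<in> free_rows \<longleftrightarrow> (\<pi> j, j) \<in> B"
proof -
  have perm: "\<pi> permutes {1..n}"
    using fibre_permutes[OF assms(1)] .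
  have "\<pi> j \<in> fst ` outside \<longleftrightarrow> (\<pi> j, j) \<in> outside"
  proof
    assume "\<pi> j \<in> fst ` outside"
    then obtain j' where j': "(\<pi> j, j') \<in> outside"
      by (metis prod.collapse imageE)
    then have "\<pi> j = \<pi> j'"
      using outside_in_fibre[OF assms(1)] by blast
    then show "(\<pi> j, j) \<in> outside"
      using j' permutes_inj[OF perm] by (metis injD)
  qed (metis image_eqI fst_conv)
  also have "\<dots> \<longleftrightarrow> (\<pi> j, j) \<notin> B"
    using assms(2) unfolding fibre_outside[OF assms(1)] by simp
  finally show ?thesis
    using assms(2) permutes_in_image[OF perm] unfolding free_rows_def by blast
qed

lemma fibre_eq_off_free_cols:
  assumes "\<pi> \<in> fibre" "j \<notin> free_cols"
  shows "\<pi> j = \<pi>0 j"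
proof (cases "j \<in> {1..n}")
  case True
  then obtain a where "(a, j) \<in> outside"
    using assms(2) unfolding free_cols_def by force
  then show ?thesis
    using outside_in_fibre[OF assms(1)] outside_in_fibre[OF perm0_in_fibre] by blast
next
  case False
  then show ?thesis
    using permutes_not_in[OF fibre_permutes[OF assms(1)]] permutes_not_in[OF perm0] by metis
qed

lemma bij_betw_fibre:
  assumes "\<pi> \<in> fibre"
  shows "bij_betw \<pi> free_cols free_rows"
proof -
  have perm: "\<pi> permutes {1..n}"
    using fibre_permutes[OF assms] .
  have "\<pi> ` free_cols = free_rows"
  proof
    show "\<pi> ` free_cols \<subseteq> free_rows"
    proof
      fix a assume "a \<in> \<pi> ` free_cols"
      then obtain j where j: "j \<in> free_cols" "a = \<pi> j"
        by blast
      then show "a \<in> free_rows"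
        using free_cols_subset mem_free_cols_iff[OF assms] mem_free_rows_iff[OF assms] by blast
    qed
    show "free_rows \<subseteq> \<pi> ` free_cols"
    proof
      fix a assume a: "a \<in> free_rows"
      then have "a \<in> \<pi> ` {1..n}"
        using free_rows_subset permutes_image[OF perm] by blast
      then obtain j where j: "j \<in> {1..n}" "a = \<pi> j"
        by blast
      then have "j \<in> free_cols"
        using a mem_free_cols_iff[OF assms] mem_free_rows_iff[OF assms] by simp
      then show "a \<in> \<pi> ` free_cols"
        using j by blast
    qed
  qed
  then show ?thesis
    unfolding bij_betw_def using permutes_inj_on[OF perm] by blast
qed

lemma fibreI:
  assumes perm: "\<pi> permutes {1..n}"
    and off: "\<And>j. j \<notin> free_cols \<Longrightarrow> \<pi> j = \<pi>0 j"
    and on: "\<And>j. j \<in> free_cols \<Longrightarrow> (\<pi> j, j) \<in> B"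
  shows "\<pi> \<in> fibre"
proof -
  have "points n \<pi> - B = outside"
  proof
    show "points n \<pi> - B \<subseteq> outside"
      using off on unfolding outside_def by fastforce
    show "outside \<subseteq> points n \<pi> - B"
    proof
      fix z assume z: "z \<in> outside"
      then obtain j where j: "z = (\<pi>0 j, j)" "j \<in> {1..n}" "z \<notin> B"
        unfolding outside_def points_def by blast
      then have "j \<notin> free_cols"
        using z unfolding free_cols_def by force
      then show "z \<in> points n \<pi> - B"
        using j off by simp
    qed
  qed
  then show ?thesis
    unfolding fibre_def using perm by blast
qed

lemma bij_free_row: "bij_betw free_row {1..n'} free_rows"
  and bij_free_col: "bij_betw free_col {1..n'} free_cols"
  and mono_free_row: "strict_mono_on {1..n'} free_row"
  and mono_free_col: "strict_mono_on {1..n'} free_col"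
proof -
  have fin: "finite free_rows" "finite free_cols"
    using free_rows_subset free_cols_subset finite_subset by blast+
  have "card free_rows = n'"
    unfolding n'_def using bij_betw_same_card[OF bij_betw_fibre[OF perm0_in_fibre]] by simp
  then show "bij_betw free_row {1..n'} free_rows" "strict_mono_on {1..n'} free_row"
    unfolding free_row_def using bij_betw_ith_smallest strict_mono_on_ith_smallest fin by metis+
  show "bij_betw free_col {1..n'} free_cols" "strict_mono_on {1..n'} free_col"
    unfolding free_col_def n'_def using bij_betw_ith_smallest strict_mono_on_ith_smallest fin by metis+
qed


lemma squeeze_in:
  assumes "\<pi> \<in> fibre" "c \<in> {1..n'}"
  shows "squeeze \<pi> c \<in> {1..n'}" "free_row (squeeze \<pi> c) = \<pi> (free_col c)"
proof -
  have "\<pi> (free_col c) \<in> free_rows"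
    using bij_betw_apply[OF bij_betw_fibre[OF assms(1)] bij_betw_apply[OF bij_free_col assms(2)]] .
  then show "squeeze \<pi> c \<in> {1..n'}" "free_row (squeeze \<pi> c) = \<pi> (free_col c)"
    unfolding squeeze_def using assms(2) bij_betw_apply[OF bij_betw_inv_into[OF bij_free_row]]
      bij_betw_inv_into_right[OF bij_free_row] by simp_all
qed

lemma squeeze_permutes:
  assumes "\<pi> \<in> fibre"
  shows "squeeze \<pi> permutes {1..n'}"
proof (rule bij_imp_permutes)
  have "bij_betw (\<lambda>c. inv_into {1..n'} free_row (\<pi> (free_col c))) {1..n'} {1..n'}"
    using bij_betw_trans[OF bij_betw_trans[OF bij_free_col bij_betw_fibre[OF assms]]
        bij_betw_inv_into[OF bij_free_row]]
    by (simp add: comp_def)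
  moreover have "bij_betw (squeeze \<pi>) {1..n'} {1..n'} \<longleftrightarrow>
      bij_betw (\<lambda>c. inv_into {1..n'} free_row (\<pi> (free_col c))) {1..n'} {1..n'}"
    by (rule bij_betw_cong) (simp add: squeeze_def)
  ultimately show "bij_betw (squeeze \<pi>) {1..n'} {1..n'}"
    by blast
  show "squeeze \<pi> c = c" if "c \<notin> {1..n'}" for c
    unfolding squeeze_def by (rule if_not_P[OF that])
qed

lemma free_shadow_down_closed:
  assumes "(free_row i, free_col c) \<in> B" "i \<in> {1..n'}" "c \<in> {1..n'}"
    and "i' \<in> {1..n'}" "c' \<in> {1..n'}" "i' \<le> i" "c' \<le> c"
  shows "(free_row i', free_col c') \<in> B"
proof -
  have "free_row i' \<le> free_row i" "free_col c' \<le> free_col c"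
    using strict_mono_on_less_eq[OF mono_free_row assms(4,2)]
      strict_mono_on_less_eq[OF mono_free_col assms(5,3)] assms(6,7) by simp_all
  moreover have "1 \<le> free_row i'" "1 \<le> free_col c'"
    using bij_betw_apply[OF bij_free_row assms(4)] bij_betw_apply[OF bij_free_col assms(5)]
      free_rows_subset free_cols_subset by auto
  ultimately show ?thesis
    using shadow_down_closed[OF assms(1)[unfolded B_def]] unfolding B_def by blast
qed

lemma cells_lam_iff:
  "(i, c) \<in> cells n' lam \<longleftrightarrow> i \<in> {1..n'} \<and> c \<in> {1..n'} \<and> (free_row i, free_col c) \<in> B"
proof (cases "i \<in> {1..n'}")
  case True
  let ?S = "{c\<in>{1..n'}. (free_row i, free_col c) \<in> B}"
  have "{1..lam i} = ?S"
    unfolding lam_def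
  proof (rule down_closed_eq_atLeastAtMost_Max)
    fix c d assume c: "c \<in> ?S" and d: "1 \<le> d" "d \<le> c"
    then have "d \<in> {1..n'}"
      by simp
    then show "d \<in> ?S"
      using free_shadow_down_closed[of i c i d] c d True by simp
  qed simp_all
  then show ?thesis
    unfolding cells_def using True by blast
qed (auto simp: cells_def)

lemma cells_lam_down_closed:
  assumes "(i, c) \<in> cells n' lam" "1 \<le> i'" "i' \<le> i" "1 \<le> c'" "c' \<le> c"
  shows "(i', c') \<in> cells n' lam"
  using assms free_shadow_down_closed[of i c i' c'] unfolding cells_lam_iff by simp

lemma cells_squeeze:
  assumes "\<pi> \<in> fibre" "c \<in> {1..n'}"
  shows "(squeeze \<pi> c, c) \<in> cells n' lam"
proof -
  have "free_col c \<in> free_cols"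
    using bij_betw_apply[OF bij_free_col assms(2)] .
  then have "(\<pi> (free_col c), free_col c) \<in> B"
    using mem_free_cols_iff[OF assms(1)] free_cols_subset by blast
  then show ?thesis
    unfolding cells_lam_iff using squeeze_in[OF assms] assms(2) by simp
qed

lemma cells_lam_first_row:
  assumes "c \<in> {1..n'}"
  shows "(1, c) \<in> cells n' lam"
  using cells_lam_down_closed[OF cells_squeeze[OF perm0_in_fibre assms], of 1 c]
    squeeze_in(1)[OF perm0_in_fibre assms] assms by simp

lemma cells_lam_first_col:
  assumes "i \<in> {1..n'}"
  shows "(i, 1) \<in> cells n' lam"
proof -
  have "i \<in> squeeze \<pi>0 ` {1..n'}"
    unfolding permutes_image[OF squeeze_permutes[OF perm0_in_fibre]] using assms .
  then obtain c where c: "c \<in> {1..n'}" "squeeze \<pi>0 c = i"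
    by blast
  then show ?thesis
    using cells_lam_down_closed[OF cells_squeeze[OF perm0_in_fibre c(1)], of i 1] assms by simp
qed

lemma ferrers_lam: "ferrers n' lam"
proof -
  have lam_iff: "c \<in> {1..lam i} \<longleftrightarrow> (i, c) \<in> cells n' lam" if "i \<in> {1..n'}" for i c
    using that unfolding cells_def by simp
  have "lam 1 = n'"
  proof (cases "n' = 0")
    case False
    then have one: "1 \<in> {1..n'}"
      by simp
    have "{1..lam 1} = {1..n'}"
    proof (rule set_eqI)
      fix c
      show "c \<in> {1..lam 1} \<longleftrightarrow> c \<in> {1..n'}"
        using lam_iff[OF one, of c] cells_lam_first_row[of c] cells_lam_iff[of 1 c] by blast
    qed
    then show ?thesis
      using False by simp
  qed (simp add: lam_def)
  moreover have "lam j \<le> lam i" if "1 \<le> i" "i \<le> j" "j \<le> n'" for i j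
  proof -
    have "{1..lam j} \<subseteq> {1..lam i}"
    proof
      fix c assume "c \<in> {1..lam j}"
      then have "(j, c) \<in> cells n' lam"
        using lam_iff[of j c] that by simp
      then have "(i, c) \<in> cells n' lam"
        using cells_lam_down_closed[of j c i c] that \<open>c \<in> {1..lam j}\<close> by simp
      then show "c \<in> {1..lam i}"
        using lam_iff[of i c] that by simp
    qed
    then show ?thesis
      by (cases "lam j = 0") auto
  qed
  moreover have "0 < lam i" if "i \<in> {1..n'}" for i
    using lam_iff[OF that, of 1] cells_lam_first_col[OF that] by simp
  ultimately show ?thesis
    unfolding ferrers_def by simp
qed


lemma transversal_of_fibre: "\<pi> \<in> fibre \<Longrightarrow> transversal n' lam (transversal_of \<pi>)"
  unfolding transversal_of_def by (rule transversal_points[OF squeeze_permutes cells_squeeze])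

lemma free_col_inv:
  assumes "j \<in> free_cols"
  shows "inv_into {1..n'} free_col j \<in> {1..n'}" "free_col (inv_into {1..n'} free_col j) = j"
  using bij_betw_apply[OF bij_betw_inv_into[OF bij_free_col] assms]
    bij_betw_inv_into_right[OF bij_free_col assms] by simp_all

lemma free_row_inv:
  assumes "a \<in> free_rows"
  shows "inv_into {1..n'} free_row a \<in> {1..n'}" "free_row (inv_into {1..n'} free_row a) = a"
  using bij_betw_apply[OF bij_betw_inv_into[OF bij_free_row] assms]
    bij_betw_inv_into_right[OF bij_free_row assms] by simp_all

lemma obtain_free_col:
  assumes "j \<in> free_cols"
  obtains c where "c \<in> {1..n'}" "free_col c = j"
  by (rule that[OF free_col_inv[OF assms]])

lemma inj_on_transversal_of: "inj_on transversal_of fibre"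
proof (rule inj_onI)
  fix \<pi>1 \<pi>2 assume fib: "\<pi>1 \<in> fibre" "\<pi>2 \<in> fibre" and eq: "transversal_of \<pi>1 = transversal_of \<pi>2"
  have squeeze_eq: "squeeze \<pi>1 = squeeze \<pi>2"
    using points_inject[OF squeeze_permutes[OF fib(1)] squeeze_permutes[OF fib(2)]] eq
    unfolding transversal_of_def .
  show "\<pi>1 = \<pi>2"
  proof
    fix j
    show "\<pi>1 j = \<pi>2 j"
    proof (cases "j \<in> free_cols")
      case True
      then obtain c where c: "c \<in> {1..n'}" "free_col c = j"
        by (rule obtain_free_col)
      then show ?thesis
        using squeeze_in(2)[OF fib(1) c(1)] squeeze_in(2)[OF fib(2) c(1)] squeeze_eq by simp
    next
      case False
      then show ?thesis
        using fibre_eq_off_free_cols[OF fib(1)] fibre_eq_off_free_cols[OF fib(2)] by simp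
    qed
  qed
qed

definition "unsqueeze \<tau> j = (if j \<in> free_cols then free_row (\<tau> (inv_into {1..n'} free_col j)) else \<pi>0 j)"

lemma unsqueeze_free_col: "c \<in> {1..n'} \<Longrightarrow> unsqueeze \<tau> (free_col c) = free_row (\<tau> c)"
  using bij_betw_apply[OF bij_free_col] bij_betw_inv_into_left[OF bij_free_col] by (simp add: unsqueeze_def)

lemma unsqueeze_permutes:
  assumes "\<tau> permutes {1..n'}"
  shows "unsqueeze \<tau> permutes {1..n}"
proof (rule bij_imp_permutes)
  have "bij_betw (\<lambda>j. free_row (\<tau> (inv_into {1..n'} free_col j))) free_cols free_rows"
    using bij_betw_trans[OF bij_betw_trans[OF bij_betw_inv_into[OF bij_free_col] permutes_imp_bij[OF assms]]
        bij_free_row]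
    by (simp add: comp_def)
  moreover have "bij_betw (unsqueeze \<tau>) free_cols free_rows \<longleftrightarrow>
      bij_betw (\<lambda>j. free_row (\<tau> (inv_into {1..n'} free_col j))) free_cols free_rows"
    by (rule bij_betw_cong) (simp add: unsqueeze_def)
  moreover have "bij_betw \<pi>0 ({1..n} - free_cols) ({1..n} - free_rows)"
    using bij_betw_DiffI[OF permutes_imp_bij[OF perm0] bij_betw_fibre[OF perm0_in_fibre]
        free_cols_subset free_rows_subset] .
  moreover have "bij_betw (unsqueeze \<tau>) ({1..n} - free_cols) ({1..n} - free_rows) \<longleftrightarrow>
      bij_betw \<pi>0 ({1..n} - free_cols) ({1..n} - free_rows)"
    by (rule bij_betw_cong) (simp add: unsqueeze_def)
  ultimately have "bij_betw (unsqueeze \<tau>) (free_cols \<union> ({1..n} - free_cols)) (free_rows \<union> ({1..n} - free_rows))"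
    by (intro bij_betw_combine) auto
  moreover have "free_cols \<union> ({1..n} - free_cols) = {1..n}" "free_rows \<union> ({1..n} - free_rows) = {1..n}"
    using free_cols_subset free_rows_subset by blast+
  ultimately show "bij_betw (unsqueeze \<tau>) {1..n} {1..n}"
    by simp
  show "unsqueeze \<tau> j = j" if "j \<notin> {1..n}" for j
    using that free_cols_subset permutes_not_in[OF perm0] by (auto simp: unsqueeze_def)
qed

lemma unsqueeze_in_fibre:
  assumes "\<tau> permutes {1..n'}" "\<And>c. c \<in> {1..n'} \<Longrightarrow> (\<tau> c, c) \<in> cells n' lam"
  shows "unsqueeze \<tau> \<in> fibre"
proof (rule fibreI[OF unsqueeze_permutes[OF assms(1)]])
  show "unsqueeze \<tau> j = \<pi>0 j" if "j \<notin> free_cols" for j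
    using that by (simp add: unsqueeze_def)
  show "(unsqueeze \<tau> j, j) \<in> B" if j: "j \<in> free_cols" for j
  proof -
    obtain c where c: "c \<in> {1..n'}" "free_col c = j"
      by (rule obtain_free_col[OF j])
    then show ?thesis
      using assms(2)[OF c(1)] unsqueeze_free_col[OF c(1)] unfolding cells_lam_iff by simp
  qed
qed

lemma squeeze_unsqueeze:
  assumes "\<tau> permutes {1..n'}" "\<And>c. c \<in> {1..n'} \<Longrightarrow> (\<tau> c, c) \<in> cells n' lam"
  shows "squeeze (unsqueeze \<tau>) = \<tau>"
proof
  fix c
  show "squeeze (unsqueeze \<tau>) c = \<tau> c"
  proof (cases "c \<in> {1..n'}")
    case True
    then show ?thesis
      using unsqueeze_free_col bij_betw_inv_into_left[OF bij_free_row] permutes_in_image[OF assms(1)]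
      by (simp add: squeeze_def)
  next
    case False
    then show ?thesis
      unfolding squeeze_def if_not_P[OF False] using permutes_not_in[OF assms(1)] by simp
  qed
qed

lemma transversal_of_surj:
  assumes "transversal n' lam T"
  shows "\<exists>\<pi>\<in>fibre. transversal_of \<pi> = T"
proof -
  obtain \<tau> where \<tau>: "\<tau> permutes {1..n'}" "points n' \<tau> = T"
    using obtain_permutation_of_transversal[OF ferrers_lam assms] by blast
  have cells: "(\<tau> c, c) \<in> cells n' lam" if "c \<in> {1..n'}" for c
  proof -
    have "(\<tau> c, c) \<in> T"
      using \<tau>(2) that by auto
    then show ?thesis
      using assms unfolding transversal_def by blast
  qed
  have "transversal_of (unsqueeze \<tau>) = T"
    unfolding transversal_of_def using squeeze_unsqueeze[OF \<tau>(1) cells] \<tau>(2) by simp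
  then show ?thesis
    using unsqueeze_in_fibre[OF \<tau>(1) cells] by blast
qed

lemma bij_betw_transversal_of: "bij_betw transversal_of fibre {T. transversal n' lam T}"
proof -
  have "transversal_of ` fibre = {T. transversal n' lam T}"
    using transversal_of_fibre transversal_of_surj by blast
  then show ?thesis
    unfolding bij_betw_def using inj_on_transversal_of by blast
qed


lemma squeeze_eq_iff:
  assumes "\<pi> \<in> fibre" "c \<in> {1..n'}" "i \<in> {1..n'}"
  shows "squeeze \<pi> c = i \<longleftrightarrow> \<pi> (free_col c) = free_row i"
proof -
  have "squeeze \<pi> c = i \<longleftrightarrow> free_row (squeeze \<pi> c) = free_row i"
    using strict_mono_on_eq[OF mono_free_row squeeze_in(1)[OF assms(1,2)] assms(3)] by simp
  then show ?thesis
    using squeeze_in(2)[OF assms(1,2)] by simp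
qed

lemma tcontains_transversal_ofI:
  assumes fib: "\<pi> \<in> fibre" and mono: "strict_mono_on {1..m} r" "strict_mono_on {1..m} c"
    and range: "\<And>a. a \<in> {1..m} \<Longrightarrow> r a \<in> {1..n'} \<and> c a \<in> {1..n'}"
    and in_B: "\<And>a b. a \<in> {1..m} \<Longrightarrow> b \<in> {1..m} \<Longrightarrow> (free_row (r a), free_col (c b)) \<in> B"
    and entry: "\<And>b. b \<in> {1..m} \<Longrightarrow> \<sigma> b \<in> {1..m} \<and> \<pi> (free_col (c b)) = free_row (r (\<sigma> b))"
    and rel: "\<And>a b. P a b \<Longrightarrow> \<sigma> a < \<sigma> b"
  shows "tcontains n' lam (transversal_of \<pi>) m P"
  unfolding tcontains_def
proof (intro exI conjI ballI allI impI)
  show "r a \<in> {1..n'}" "c a \<in> {1..n'}" if "a \<in> {1..m}" for a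
    using range that by simp_all
  show "r a < r b" "c a < c b" if "1 \<le> a" "a < b" "b \<le> m" for a b
    using that strict_mono_onD[OF mono(1), of a b] strict_mono_onD[OF mono(2), of a b] by simp_all
  show "(r a, c b) \<in> cells n' lam" if "a \<in> {1..m}" "b \<in> {1..m}" for a b
    unfolding cells_lam_iff using range in_B that by simp
  show "\<sigma> b \<in> {1..m}" if "b \<in> {1..m}" for b
    using entry that by simp
  show "(r (\<sigma> b), c b) \<in> transversal_of \<pi>" if b: "b \<in> {1..m}" for b
  proof -
    have "squeeze \<pi> (c b) = r (\<sigma> b)"
      using squeeze_eq_iff[OF fib, of "c b" "r (\<sigma> b)"] range entry b by simp
    then show ?thesis
      unfolding transversal_of_def using range b by simp
  qed
  show "\<sigma> a < \<sigma> b" if "P a b" for a b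
    using rel that .
qed

lemma tcontains_transversal_ofE:
  assumes fib: "\<pi> \<in> fibre" and "tcontains n' lam (transversal_of \<pi>) m P"
  obtains r c \<sigma> where "strict_mono_on {1..m} r" "strict_mono_on {1..m} c"
    "\<And>a. a \<in> {1..m} \<Longrightarrow> r a \<in> {1..n'} \<and> c a \<in> {1..n'}"
    "\<And>a b. a \<in> {1..m} \<Longrightarrow> b \<in> {1..m} \<Longrightarrow> (free_row (r a), free_col (c b)) \<in> B"
    "\<And>b. b \<in> {1..m} \<Longrightarrow> \<sigma> b \<in> {1..m} \<and> \<pi> (free_col (c b)) = free_row (r (\<sigma> b))"
    "\<And>a b. P a b \<Longrightarrow> \<sigma> a < \<sigma> b"
proof -
  obtain r c \<sigma> where range: "\<forall>a\<in>{1..m}. r a \<in> {1..n'} \<and> c a \<in> {1..n'}"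
    and mono: "\<forall>a b. 1 \<le> a \<longrightarrow> a < b \<longrightarrow> b \<le> m \<longrightarrow> r a < r b \<and> c a < c b"
    and cells: "\<forall>a\<in>{1..m}. \<forall>b\<in>{1..m}. (r a, c b) \<in> cells n' lam"
    and entry: "\<forall>b\<in>{1..m}. \<sigma> b \<in> {1..m} \<and> (r (\<sigma> b), c b) \<in> transversal_of \<pi>"
    and rel: "\<forall>j j'. P j j' \<longrightarrow> \<sigma> j < \<sigma> j'"
    using assms(2) unfolding tcontains_def by blast
  show thesis
  proof (rule that[of r c \<sigma>])
    show "strict_mono_on {1..m} r" "strict_mono_on {1..m} c"
      using mono unfolding strict_mono_on_atLeastAtMost_iff by blast+
    show "(free_row (r a), free_col (c b)) \<in> B" if "a \<in> {1..m}" "b \<in> {1..m}" for a b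
      using cells that unfolding cells_lam_iff by blast
    show "\<sigma> b \<in> {1..m} \<and> \<pi> (free_col (c b)) = free_row (r (\<sigma> b))" if b: "b \<in> {1..m}" for b
    proof -
      have "\<sigma> b \<in> {1..m}" "squeeze \<pi> (c b) = r (\<sigma> b)"
        using entry b unfolding transversal_of_def by auto
      then show ?thesis
        using squeeze_eq_iff[OF fib, of "c b" "r (\<sigma> b)"] range b by simp
    qed
  qed (use range rel in simp_all)
qed

lemma shadow_occ_free_coordinates:
  assumes fib: "\<pi> \<in> fibre" and occ: "shadow_occ \<pi> P i"
  obtains col row where "strict_mono_on {1..m} col" "inj_on row {1..m}"
    "\<And>b. b \<in> {1..m} \<Longrightarrow> col b \<in> {1..n'} \<and> free_col (col b) = i b"
    "\<And>b. b \<in> {1..m} \<Longrightarrow> row b \<in> {1..n'} \<and> free_row (row b) = \<pi> (i b)"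
proof -
  have i_range: "\<And>a. a \<in> {1..m} \<Longrightarrow> i a \<in> {1..n}" and i_mono: "strict_mono_on {1..m} i"
    and i_B: "\<And>a. a \<in> {1..m} \<Longrightarrow> (\<pi> (i a), i a) \<in> B"
    using occ fibre_shadow[OF fib] unfolding shadow_occ_def by auto
  define col where "col b = inv_into {1..n'} free_col (i b)" for b
  define row where "row b = inv_into {1..n'} free_row (\<pi> (i b))" for b
  have col: "col b \<in> {1..n'}" "free_col (col b) = i b"
    and row: "row b \<in> {1..n'}" "free_row (row b) = \<pi> (i b)" if "b \<in> {1..m}" for b
    unfolding col_def row_def
    using free_col_inv free_row_inv mem_free_cols_iff[OF fib i_range[OF that]]
      mem_free_rows_iff[OF fib i_range[OF that]] i_B[OF that] by blast+
  show thesis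
  proof (rule that[of col row])
    show "strict_mono_on {1..m} col"
    proof (rule strict_mono_onI)
      fix a b assume ab: "a \<in> {1..m}" "b \<in> {1..m}" "a < b"
      then have "free_col (col a) < free_col (col b)"
        using strict_mono_onD[OF i_mono ab] col by simp
      then show "col a < col b"
        using strict_mono_on_less[OF mono_free_col col(1)[OF ab(1)] col(1)[OF ab(2)]] by simp
    qed
    show "inj_on row {1..m}"
    proof (rule inj_onI)
      fix a b assume ab: "a \<in> {1..m}" "b \<in> {1..m}" "row a = row b"
      then have "\<pi> (i a) = \<pi> (i b)"
        using row(2)[OF ab(1)] row(2)[OF ab(2)] by simp
      then have "i a = i b"
        by (rule injD[OF permutes_inj[OF fibre_permutes[OF fib]]])
      then show "a = b"
        using strict_mono_on_eq[OF i_mono ab(1,2)] by simp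
    qed
  qed (use col row in simp_all)
qed

lemma shadow_occ_imp_tcontains:
  assumes fib: "\<pi> \<in> fibre" and field: "\<And>a b. P a b \<Longrightarrow> a \<in> {1..m} \<and> b \<in> {1..m}"
    and occ: "shadow_occ \<pi> P i"
  shows "tcontains n' lam (transversal_of \<pi>) m P"
proof -
  have i_rel: "\<And>a b. P a b \<Longrightarrow> \<pi> (i a) < \<pi> (i b)"
    and i_B: "\<And>a b. a \<in> {1..m} \<Longrightarrow> b \<in> {1..m} \<Longrightarrow> (\<pi> (i a), i b) \<in> B"
    using occ fibre_shadow[OF fib] unfolding shadow_occ_def by auto
  obtain col row where col_mono: "strict_mono_on {1..m} col" and "inj_on row {1..m}"
    and col: "\<And>b. b \<in> {1..m} \<Longrightarrow> col b \<in> {1..n'} \<and> free_col (col b) = i b"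
    and row: "\<And>b. b \<in> {1..m} \<Longrightarrow> row b \<in> {1..n'} \<and> free_row (row b) = \<pi> (i b)"
    using shadow_occ_free_coordinates[OF fib occ] by blast
  then obtain r \<sigma> where "strict_mono_on {1..m} r \<and> r ` {1..m} = row ` {1..m}
      \<and> (\<forall>b\<in>{1..m}. \<sigma> b \<in> {1..m} \<and> r (\<sigma> b) = row b)"
    using ex_sorted_values by blast
  then have r_mono: "strict_mono_on {1..m} r" and r_row: "\<And>a. a \<in> {1..m} \<Longrightarrow> r a \<in> row ` {1..m}"
    and \<sigma>: "\<And>b. b \<in> {1..m} \<Longrightarrow> \<sigma> b \<in> {1..m} \<and> r (\<sigma> b) = row b"
    by auto
  show ?thesis
  proof (rule tcontains_transversal_ofI[OF fib r_mono col_mono])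
    show "r a \<in> {1..n'} \<and> col a \<in> {1..n'}" if "a \<in> {1..m}" for a
      using r_row[OF that] row col that by auto
    show "(free_row (r a), free_col (col b)) \<in> B" if "a \<in> {1..m}" "b \<in> {1..m}" for a b
      using r_row[OF that(1)] row col i_B that by auto
    show "\<sigma> b \<in> {1..m} \<and> \<pi> (free_col (col b)) = free_row (r (\<sigma> b))" if "b \<in> {1..m}" for b
      using \<sigma> row col that by simp
    show "\<sigma> a < \<sigma> b" if "P a b" for a b
    proof -
      have ab: "a \<in> {1..m}" "b \<in> {1..m}"
        using field[OF that] by auto
      then have "free_row (row a) < free_row (row b)"
        using i_rel[OF that] row by simp
      then have "r (\<sigma> a) < r (\<sigma> b)"
        using strict_mono_on_less[OF mono_free_row, of "row a" "row b"] \<sigma> row ab by simp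
      then show ?thesis
        using strict_mono_on_less[OF r_mono, of "\<sigma> a" "\<sigma> b"] \<sigma> ab by simp
    qed
  qed
qed

lemma tcontains_imp_shadow_occ:
  assumes fib: "\<pi> \<in> fibre" and field: "\<And>a b. P a b \<Longrightarrow> a \<in> {1..m} \<and> b \<in> {1..m}"
    and "tcontains n' lam (transversal_of \<pi>) m P"
  shows "\<exists>i. shadow_occ \<pi> P i"
proof -
  obtain r c \<sigma> where r_mono: "strict_mono_on {1..m} r" and c_mono: "strict_mono_on {1..m} c"
    and range: "\<And>a. a \<in> {1..m} \<Longrightarrow> r a \<in> {1..n'} \<and> c a \<in> {1..n'}"
    and in_B: "\<And>a b. a \<in> {1..m} \<Longrightarrow> b \<in> {1..m} \<Longrightarrow> (free_row (r a), free_col (c b)) \<in> B"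
    and entry: "\<And>b. b \<in> {1..m} \<Longrightarrow> \<sigma> b \<in> {1..m} \<and> \<pi> (free_col (c b)) = free_row (r (\<sigma> b))"
    and rel: "\<And>a b. P a b \<Longrightarrow> \<sigma> a < \<sigma> b"
    using tcontains_transversal_ofE[OF fib assms(3)] by blast
  have "shadow_occ \<pi> P (\<lambda>a. free_col (c a))"
    unfolding shadow_occ_def fibre_shadow[OF fib]
  proof (intro conjI ballI allI impI)
    show "free_col (c a) \<in> {1..n}" if "a \<in> {1..m}" for a
      using bij_betw_apply[OF bij_free_col] free_cols_subset range that by blast
    show "strict_mono_on {1..m} (\<lambda>a. free_col (c a))"
    proof (rule strict_mono_onI)
      fix a b assume ab: "a \<in> {1..m}" "b \<in> {1..m}" "a < b"
      then show "free_col (c a) < free_col (c b)"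
        using strict_mono_onD[OF mono_free_col] strict_mono_onD[OF c_mono ab] range by simp
    qed
    show "\<pi> (free_col (c a)) < \<pi> (free_col (c b))" if "P a b" for a b
    proof -
      have ab: "a \<in> {1..m}" "b \<in> {1..m}"
        using field[OF that] by auto
      then have "r (\<sigma> a) < r (\<sigma> b)"
        using strict_mono_onD[OF r_mono] rel[OF that] entry by simp
      then show ?thesis
        using entry ab strict_mono_onD[OF mono_free_row] range by simp
    qed
    show "(\<pi> (free_col (c a)), free_col (c b)) \<in> B" if "a \<in> {1..m}" "b \<in> {1..m}" for a b
      using in_B entry that by simp
  qed
  then show ?thesis
    by blast
qed

lemma card_fibre_avoiders:
  assumes "split_pop m k J Q p"
  shows "card {\<pi>\<in>{\<pi>. \<pi> permutes {1..n}}. key \<pi> = key \<pi>0 \<and> \<not> contains k p n \<pi>}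
    = card (tavoiders n' lam m (restr p {1..m}))"
proof -
  interpret split_pop n m k J Q p
    by fact
  have field: "\<And>a b. restr p {1..m} a b \<Longrightarrow> a \<in> {1..m} \<and> b \<in> {1..m}"
    unfolding restr_def by blast
  have contains_iff: "contains k p n \<pi> \<longleftrightarrow> tcontains n' lam (transversal_of \<pi>) m (restr p {1..m})"
    if "\<pi> \<in> fibre" for \<pi>
    using contains_iff_shadow_occ[OF fibre_permutes[OF that]] shadow_occ_imp_tcontains[OF that field]
      tcontains_imp_shadow_occ[OF that field] by blast
  have "{\<pi>\<in>{\<pi>. \<pi> permutes {1..n}}. key \<pi> = key \<pi>0 \<and> \<not> contains k p n \<pi>}
      = {\<pi>\<in>fibre. \<not> tcontains n' lam (transversal_of \<pi>) m (restr p {1..m})}"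
    using key_eq_iff_fibre contains_iff fibre_permutes by blast
  moreover have "bij_betw transversal_of {\<pi>\<in>fibre. \<not> tcontains n' lam (transversal_of \<pi>) m (restr p {1..m})}
      {T\<in>{T. transversal n' lam T}. \<not> tcontains n' lam T m (restr p {1..m})}"
    by (rule bij_betw_Collect[OF bij_betw_transversal_of]) simp
  ultimately show ?thesis
    unfolding tavoiders_def by (simp add: bij_betw_same_card)
qed

end

section \<open>Wilf-equivalence\<close>

lemma (in upper_pattern) card_avoiders_eq:
  assumes "split_pop m k J Q p" "split_pop m k J Q p'"
    and "shape_wilf_equiv m (restr p {1..m}) (restr p' {1..m})"
  shows "card (avoiders k p n) = card (avoiders k p' n)"
proof -
  let ?perms = "{\<pi>. \<pi> permutes {1..n}}"
  have avoiders: "avoiders k q n = {\<pi>\<in>?perms. \<not> contains k q n \<pi>}" for q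
    unfolding avoiders_def by simp
  have fibre_eq: "card {\<pi>\<in>?perms. key \<pi> = key \<pi>0 \<and> \<not> contains k p n \<pi>}
      = card {\<pi>\<in>?perms. key \<pi> = key \<pi>0 \<and> \<not> contains k p' n \<pi>}" if "\<pi>0 \<in> ?perms" for \<pi>0
  proof -
    interpret upper_fibre n m k J Q \<pi>0
      using that by unfold_locales simp
    show ?thesis
      using card_fibre_avoiders[OF assms(1)] card_fibre_avoiders[OF assms(2)] assms(3) ferrers_lam
      unfolding shape_wilf_equiv_def by simp
  qed
  show ?thesis
    unfolding avoiders
  proof (rule card_eq_by_fibres[where f = key])
    show "finite ?perms"
      by (simp add: finite_permutations)
    fix y assume "y \<in> key ` ?perms"
    then obtain \<pi>0 where "\<pi>0 \<in> ?perms" "y = key \<pi>0"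
      by blast
    then show "card {\<pi>\<in>?perms. key \<pi> = y \<and> \<not> contains k p n \<pi>}
        = card {\<pi>\<in>?perms. key \<pi> = y \<and> \<not> contains k p' n \<pi>}"
      using fibre_eq by simp
  qed
qed


lemma isolated_set_subset: "isolated_set k p \<subseteq> {1..k}"
  unfolding isolated_set_def isolated_def by blast

lemma Min_isolated_set:
  assumes "isolated_set k p \<noteq> {}"
  shows "Min (isolated_set k p) \<in> isolated_set k p" "Min (isolated_set k p) \<in> {1..k}"
proof -
  have "finite (isolated_set k p)"
    using finite_subset[OF isolated_set_subset] by blast
  then show "Min (isolated_set k p) \<in> isolated_set k p"
    using assms by (rule Min_in)
  then show "Min (isolated_set k p) \<in> {1..k}"
    using isolated_set_subset by blast
qed

lemma pop_rel_not_isolated: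
  assumes "pop k p" "p x y"
  shows "x \<in> {1..k} - isolated_set k p" "y \<in> {1..k} - isolated_set k p"
  using assms pop_field[OF assms] unfolding isolated_set_def isolated_def by blast+

lemma restr_not_isolated_eq:
  assumes "pop k p"
  shows "restr p ({1..k} - isolated_set k p) = p"
  using pop_rel_not_isolated[OF assms] unfolding restr_def by blast

lemma pop_eq_if_restr_not_isolated_eq:
  assumes "pop k p" "pop k p'" "isolated_set k p = isolated_set k p'"
    and "restr p ({1..k} - isolated_set k p) = restr p' ({1..k} - isolated_set k p)"
  shows "p = p'"
proof -
  have "p = restr p ({1..k} - isolated_set k p)"
    using restr_not_isolated_eq[OF assms(1)] by simp
  also have "\<dots> = restr p' ({1..k} - isolated_set k p')"
    using assms(3,4) by simp
  also have "\<dots> = p'"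
    using restr_not_isolated_eq[OF assms(2)] .
  finally show ?thesis .
qed

lemma split_pop_at_first_isolated:
  fixes k :: nat and p :: "nat \<Rightarrow> nat \<Rightarrow> bool"
  defines "I \<equiv> isolated_set k p"
  assumes pop: "pop k p" and "I \<noteq> {}" "1 < Min I"
    and below: "\<forall>x\<in>{Min I..k} - I. \<forall>y\<in>{1..Min I - 1}. p y x"
  shows "split_pop (Min I - 1) k ({Min I..k} - I) (restr p ({Min I..k} - I)) p"
proof unfold_locales
  show "{Min I..k} - I \<subseteq> {Min I - 1 + 1..k}"
    using assms(4) by auto
  show "x \<in> {Min I..k} - I \<and> y \<in> {Min I..k} - I" if "restr p ({Min I..k} - I) x y" for x y
    using that unfolding restr_def by blast
  show "Min I - 1 < k" "1 \<le> Min I - 1"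
    using Min_isolated_set(2)[OF assms(3)[unfolded I_def]] assms(4) unfolding I_def by auto
  show "(Min I - 1 < x \<longrightarrow> x \<in> {Min I..k} - I) \<and> (Min I - 1 < y \<longrightarrow> y \<in> {Min I..k} - I)"
    if "p x y" for x y
    using pop_rel_not_isolated[OF pop that] unfolding I_def by auto
  show "p y x" if "x \<in> {Min I..k} - I" "y \<in> {1..Min I - 1}" for x y
    using below that by blast
qed (use pop in simp_all)

theorem theorem1p2:
  fixes k :: nat and p p' :: "nat \<Rightarrow> nat \<Rightarrow> bool"
  assumes "pop k p" and "pop k p'"
    and "isolated_set k p = isolated_set k p'"
    and "isolated_set k p \<noteq> {}"
    and "\<forall>x\<in>{Min (isolated_set k p)..k} - isolated_set k p.
           \<forall>y\<in>{1..Min (isolated_set k p) - 1}. p y x \<and> p' y x"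
    and "shape_wilf_equiv (Min (isolated_set k p) - 1)
           (restr p {1..Min (isolated_set k p) - 1})
           (restr p' {1..Min (isolated_set k p) - 1})"
    and "restr p ({Min (isolated_set k p)..k} - isolated_set k p)
         = restr p' ({Min (isolated_set k p)..k} - isolated_set k p)"
  shows "wilf_equiv k p p'"
proof (cases "Min (isolated_set k p) = 1")
  case True
  then have "p = p'"
    using pop_eq_if_restr_not_isolated_eq[OF assms(1-3)] assms(7) by simp
  then show ?thesis
    unfolding wilf_equiv_def by simp
next
  case False
  let ?m = "Min (isolated_set k p) - 1" and ?J = "{Min (isolated_set k p)..k} - isolated_set k p"
  have later: "1 < Min (isolated_set k p)"
    using False Min_isolated_set(2)[OF assms(4)] by simp
  have "split_pop ?m k ?J (restr p ?J) p"
    using split_pop_at_first_isolated[OF assms(1)] assms(4,5) later by blast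
  moreover have "split_pop ?m k ?J (restr p ?J) p'"
    using split_pop_at_first_isolated[OF assms(2)] assms(3-5,7) later by simp
  ultimately show ?thesis
    using upper_pattern.card_avoiders_eq[OF split_pop.axioms(1)] assms(6)
    unfolding wilf_equiv_def by blast
qed

end
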